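(* Let $X\subseteq[\omega]^\omega$ be closed such that $|x\cap y|=\omega$ for all $x,y\in X$. Then $X$ is $\sigma$-compact.
   Context: $[\omega]^\omega$ is the set of infinite subsets of $\omega$, topologized as a subspace of $\mathcal{P}(\omega)\cong 2^\omega$ (equivalently, by identifying each infinite set with its increasing enumeration, as a subspace of $\omega^\omega$). *)

theory Defs
  imports "HOL-Analysis.Analysis"
begin

text \<open>Cantor space P(omega) = 2^omega: subsets of nat identified with their
characteristic functions nat => bool, with the product of discrete topologies.\<close>
definition cantor_space :: "(nat \<Rightarrow> bool) topology" where
  "cantor_space = product_topology (\<lambda>_. discrete_topology UNIV) UNIV"

definition inf_subsets :: "(nat \<Rightarrow> bool) set" where
  "inf_subsets = {x. infinite {n. x n}}"

definition inf_subsets_space :: "(nat \<Rightarrow> bool) topology" where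
  "inf_subsets_space = subtopology cantor_space inf_subsets"

definition sigma_compact_in :: "'a topology \<Rightarrow> 'a set \<Rightarrow> bool" where
  "sigma_compact_in T S \<longleftrightarrow> (\<exists>K :: nat \<Rightarrow> 'a set. (\<forall>n. compactin T (K n)) \<and> S = (\<Union>n. K n))"

end

theory Submission
  imports Defs "HOL-Library.Sublist"
begin

(* Code finite 0-1 sequences as nodes of a tree, call a node l bad if the part cone X l of X
   above it is not sigma-compact, and splitting if infinitely many of its extensions
   extend_one l k (zeros up to position k, then a one) are bad.  Every bad node has a splitting
   extension: otherwise the points of cone X l whose long initial segments are all bad form a
   closed subset of Cantor space consisting of infinite sets, hence a compact set, and the rest
   of cone X l is covered by countably many sigma-compact cones.  If X is not sigma-compact, the
   root is bad, and we can grow two chains of splitting nodes alternately, each time placing the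
   new ones of one chain beyond the current length of the other.  As X is closed, both limits
   lie in X, yet they can only share ones of the common starting node, a finite set. *)

lemma sigma_compact_in_iff_countable_family:
  "sigma_compact_in T S \<longleftrightarrow> (\<exists>\<K>. countable \<K> \<and> (\<forall>K\<in>\<K>. compactin T K) \<and> S = \<Union>\<K>)"
proof
  assume "sigma_compact_in T S"
  then obtain K :: "nat \<Rightarrow> _" where "\<forall>n. compactin T (K n)" "S = (\<Union>n. K n)"
    unfolding sigma_compact_in_def by blast
  then show "\<exists>\<K>. countable \<K> \<and> (\<forall>K\<in>\<K>. compactin T K) \<and> S = \<Union>\<K>"
    by (intro exI[of _ "range K"]) auto
next
  assume "\<exists>\<K>. countable \<K> \<and> (\<forall>K\<in>\<K>. compactin T K) \<and> S = \<Union>\<K>"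
  then obtain \<K> where \<K>: "countable \<K>" "\<forall>K\<in>\<K>. compactin T K" "S = \<Union>\<K>" by blast
  show "sigma_compact_in T S"
  proof (cases "\<K> = {}")
    case True
    with \<K>(3) show ?thesis
      unfolding sigma_compact_in_def by (intro exI[of _ "\<lambda>_. {}"]) simp
  next
    case False
    then have range: "range (from_nat_into \<K>) = \<K>"
      using \<K>(1) by (simp add: range_from_nat_into)
    have "\<forall>n. compactin T (from_nat_into \<K> n)"
      using \<K>(2) range by blast
    moreover have "S = (\<Union>n. from_nat_into \<K> n)"
      using \<K>(3) range by simp
    ultimately show ?thesis
      unfolding sigma_compact_in_def by (intro exI[of _ "from_nat_into \<K>"] conjI)
  qed
qed

lemma compactin_imp_sigma_compact_in: "compactin T S \<Longrightarrow> sigma_compact_in T S"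
  unfolding sigma_compact_in_def by (intro exI[of _ "\<lambda>_. S"]) auto

lemma sigma_compact_in_UN:
  assumes "countable I" and "\<And>i. i \<in> I \<Longrightarrow> sigma_compact_in T (A i)"
  shows "sigma_compact_in T (\<Union>i\<in>I. A i)"
proof -
  have "\<forall>i\<in>I. \<exists>\<K>. countable \<K> \<and> (\<forall>K\<in>\<K>. compactin T K) \<and> A i = \<Union>\<K>"
    using assms(2) unfolding sigma_compact_in_iff_countable_family by blast
  then obtain \<K> where \<K>: "\<forall>i\<in>I. countable (\<K> i) \<and> (\<forall>K\<in>\<K> i. compactin T K) \<and> A i = \<Union>(\<K> i)"
    by (rule bchoice[THEN exE])
  show ?thesis
    unfolding sigma_compact_in_iff_countable_family
  proof (intro exI[of _ "\<Union>i\<in>I. \<K> i"] conjI)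
    show "countable (\<Union>i\<in>I. \<K> i)"
      using \<K> \<open>countable I\<close> by (simp add: countable_UN)
  qed (use \<K> in auto)
qed

lemma sigma_compact_in_Un:
  assumes "sigma_compact_in T S" and "sigma_compact_in T U"
  shows "sigma_compact_in T (S \<union> U)"
proof -
  have "sigma_compact_in T (\<Union>V\<in>{S, U}. V)"
    by (rule sigma_compact_in_UN) (use assms in auto)
  then show ?thesis by simp
qed

definition init_seg :: "(nat \<Rightarrow> bool) \<Rightarrow> nat \<Rightarrow> bool list" where
  "init_seg y m = map y [0..<m]"

lemma length_init_seg [simp]: "length (init_seg y m) = m"
  by (simp add: init_seg_def)

lemma nth_init_seg [simp]: "i < m \<Longrightarrow> init_seg y m ! i = y i"
  by (simp add: init_seg_def)

lemma init_seg_eq_iff: "init_seg y m = init_seg z m \<longleftrightarrow> (\<forall>i<m. y i = z i)"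
  by (simp add: list_eq_iff_nth_eq)

lemma init_seg_eq_list_iff: "init_seg w (length l) = l \<longleftrightarrow> (\<forall>i<length l. w i = l ! i)"
  by (simp add: list_eq_iff_nth_eq)

lemma take_init_seg: "n \<le> m \<Longrightarrow> take n (init_seg y m) = init_seg y n"
  by (simp add: init_seg_def take_map)

lemma prefix_init_seg: "n \<le> m \<Longrightarrow> prefix (init_seg y n) (init_seg y m)"
  by (metis take_init_seg take_is_prefix)

lemma init_seg_eq_append_zeros:
  assumes "m \<le> K" and "\<forall>i\<in>{m..<K}. \<not> z i"
  shows "init_seg z K = init_seg z m @ replicate (K - m) False"
  using assms by (intro nth_equalityI) (auto simp: nth_append)

lemma topspace_cantor_space [simp]: "topspace cantor_space = UNIV"
  by (simp add: cantor_space_def)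

lemma openin_cantor_space_cylinder: "openin cantor_space {w. init_seg w m = l}"
proof (cases "length l = m")
  case True
  have "{w. init_seg w m = l} = PiE UNIV (\<lambda>i. if i < m then {l ! i} else UNIV)"
    unfolding True[symmetric] init_seg_eq_list_iff by (auto simp: PiE_def Pi_def)
  moreover have "finite {i. (if i < m then {l ! i} else UNIV) \<noteq> (UNIV :: bool set)}"
    by (rule finite_subset[of _ "{..<m}"]) auto
  ultimately show ?thesis
    unfolding cantor_space_def by (simp add: openin_PiE_gen)
next
  case False
  then show ?thesis by (metis (mono_tags) empty_Collect_eq length_init_seg openin_empty)
qed

lemma openin_cantor_space_iff:
  "openin cantor_space U \<longleftrightarrow> (\<forall>z\<in>U. \<exists>m. {w. init_seg w m = init_seg z m} \<subseteq> U)"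
proof
  assume "openin cantor_space U"
  show "\<forall>z\<in>U. \<exists>m. {w. init_seg w m = init_seg z m} \<subseteq> U"
  proof
    fix z assume "z \<in> U"
    with \<open>openin cantor_space U\<close> obtain V where
      fin: "finite {i. V i \<noteq> UNIV}" and "z \<in> PiE UNIV V" and sub: "PiE UNIV V \<subseteq> U"
      unfolding cantor_space_def openin_product_topology_alt by auto
    from fin obtain m where m: "\<And>i. V i \<noteq> UNIV \<Longrightarrow> i < m"
      unfolding finite_nat_set_iff_bounded by blast
    have "{w. init_seg w m = init_seg z m} \<subseteq> PiE UNIV V"
      using \<open>z \<in> PiE UNIV V\<close> m by (fastforce simp: init_seg_eq_iff PiE_def Pi_def)
    with sub show "\<exists>m. {w. init_seg w m = init_seg z m} \<subseteq> U" by blast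
  qed
next
  assume cylinders: "\<forall>z\<in>U. \<exists>m. {w. init_seg w m = init_seg z m} \<subseteq> U"
  show "openin cantor_space U"
  proof (subst openin_subopen, intro ballI)
    fix z assume "z \<in> U"
    with cylinders obtain m where "{w. init_seg w m = init_seg z m} \<subseteq> U" by blast
    then show "\<exists>V. openin cantor_space V \<and> z \<in> V \<and> V \<subseteq> U"
      by (intro exI[of _ "{w. init_seg w m = init_seg z m}"]) (simp add: openin_cantor_space_cylinder)
  qed
qed

lemma closedin_cantor_space_iff:
  "closedin cantor_space C \<longleftrightarrow> (\<forall>z. (\<forall>m. \<exists>y\<in>C. init_seg y m = init_seg z m) \<longrightarrow> z \<in> C)"
  unfolding closedin_def openin_cantor_space_iff by (simp add: subset_iff) blast

lemma compact_space_cantor_space: "compact_space cantor_space"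
  unfolding cantor_space_def
  by (simp add: compact_space_product_topology compact_space_discrete_topology)

lemma topspace_inf_subsets_space [simp]: "topspace inf_subsets_space = inf_subsets"
  by (simp add: inf_subsets_space_def)

lemma compactin_inf_subsets_space:
  assumes "closedin cantor_space S" and "S \<subseteq> inf_subsets"
  shows "compactin inf_subsets_space S"
  using assms closedin_compact_space[OF compact_space_cantor_space]
  by (simp add: inf_subsets_space_def compactin_subtopology)

lemma mem_closedin_inf_subsets_space:
  assumes "closedin inf_subsets_space X" and "infinite {n. z n}"
    and "\<forall>m. \<exists>y\<in>X. init_seg y m = init_seg z m"
  shows "z \<in> X"
proof -
  obtain C where C: "closedin cantor_space C" "X = C \<inter> inf_subsets"
    using assms(1) unfolding inf_subsets_space_def closedin_subtopology by blast
  with assms(3) have "z \<in> C"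
    unfolding closedin_cantor_space_iff by blast
  with C(2) assms(2) show ?thesis
    by (simp add: inf_subsets_def)
qed

lemma ball_atLeastLessThan_shift:
  fixes m n :: nat
  shows "(\<forall>i\<in>{m..<m + n}. P i) \<longleftrightarrow> (\<forall>j<n. P (m + j))"
proof -
  have "P i" if "\<forall>j<n. P (m + j)" and "i \<in> {m..<m + n}" for i
    using that(1)[rule_format, of "i - m"] that(2) by auto
  then show ?thesis by auto
qed

lemma all_less_add_iff:
  fixes m n :: nat
  shows "(\<forall>i<m + n. P i) \<longleftrightarrow> (\<forall>i<m. P i) \<and> (\<forall>j<n. P (m + j))"
proof -
  have "(\<forall>i<m + n. P i) \<longleftrightarrow> (\<forall>i<m. P i) \<and> (\<forall>i\<in>{m..<m + n}. P i)"
    by (auto simp: not_less)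
  then show ?thesis by (simp add: ball_atLeastLessThan_shift)
qed

definition ones :: "bool list \<Rightarrow> nat set" where
  "ones l = {i. i < length l \<and> l ! i}"

lemma ones_less_length: "i \<in> ones l \<Longrightarrow> i < length l"
  by (simp add: ones_def)

lemma finite_ones [simp]: "finite (ones l)"
  by (rule finite_subset[of _ "{..<length l}"]) (auto simp: ones_def)

lemma ones_append: "ones (a @ t) = ones a \<union> (+) (length a) ` ones t"
proof -
  have "i \<in> ones (a @ t) \<longleftrightarrow> i \<in> ones a \<union> (+) (length a) ` ones t" for i
  proof (cases "i < length a")
    case False
    then obtain j where "i = length a + j"
      by (metis le_add_diff_inverse not_less)
    then show ?thesis by (auto simp: ones_def nth_append)
  qed (auto simp: ones_def nth_append)
  then show ?thesis by blast
qed

lemma ones_replicate_False [simp]: "ones (replicate n False) = {}"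
  by (simp add: ones_def)

lemma ones_mono: "prefix a b \<Longrightarrow> ones a \<subseteq> ones b"
  by (auto simp: prefix_def ones_append)

definition cone :: "(nat \<Rightarrow> bool) set \<Rightarrow> bool list \<Rightarrow> (nat \<Rightarrow> bool) set" where
  "cone X l = {y \<in> X. init_seg y (length l) = l}"

lemma cone_Nil [simp]: "cone X [] = X"
  by (simp add: cone_def init_seg_def)

lemma mem_cone_append:
  "y \<in> cone X (l @ t) \<longleftrightarrow> y \<in> cone X l \<and> (\<forall>i<length t. y (length l + i) = t ! i)"
proof -
  have "init_seg y (length (l @ t)) = l @ t \<longleftrightarrow> (\<forall>i<length l + length t. y i = (l @ t) ! i)"
    by (subst init_seg_eq_list_iff) simp
  also have "\<dots> \<longleftrightarrow> init_seg y (length l) = l \<and> (\<forall>i<length t. y (length l + i) = t ! i)"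
    by (simp add: all_less_add_iff nth_append init_seg_eq_list_iff)
  finally show ?thesis by (auto simp: cone_def)
qed

lemma cone_antimono: "prefix l l' \<Longrightarrow> cone X l' \<subseteq> cone X l"
  by (auto simp: prefix_def mem_cone_append)

definition bad :: "(nat \<Rightarrow> bool) set \<Rightarrow> bool list \<Rightarrow> bool" where
  "bad X l \<longleftrightarrow> \<not> sigma_compact_in inf_subsets_space (cone X l)"

lemma bad_imp_cone_nonempty: "bad X l \<Longrightarrow> cone X l \<noteq> {}"
  unfolding bad_def using compactin_imp_sigma_compact_in by fastforce

definition extend_one :: "bool list \<Rightarrow> nat \<Rightarrow> bool list" where
  "extend_one l k = l @ replicate (k - length l) False @ [True]"

lemma length_extend_one [simp]: "length l \<le> k \<Longrightarrow> length (extend_one l k) = Suc k"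
  by (simp add: extend_one_def)

lemma prefix_extend_one: "prefix l (extend_one l k)"
  by (simp add: extend_one_def)

lemma ones_extend_one:
  assumes "length l \<le> k"
  shows "ones (extend_one l k) = insert k (ones l)"
proof -
  have "ones [True] = {0}" by (auto simp: ones_def)
  with assms show ?thesis by (simp add: extend_one_def ones_append)
qed

lemma mem_cone_append_zeros:
  "length l \<le> K \<Longrightarrow>
   y \<in> cone X (l @ replicate (K - length l) False) \<longleftrightarrow> y \<in> cone X l \<and> (\<forall>i\<in>{length l..<K}. \<not> y i)"
  using ball_atLeastLessThan_shift[of "length l" "K - length l" "\<lambda>i. \<not> y i"]
  by (simp add: mem_cone_append)

lemma mem_cone_extend_one:
  "length l \<le> k \<Longrightarrow>
   y \<in> cone X (extend_one l k) \<longleftrightarrow> y \<in> cone X l \<and> (\<forall>i\<in>{length l..<k}. \<not> y i) \<and> y k"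
  unfolding extend_one_def append_assoc[symmetric] mem_cone_append[of y X "_ @ _"]
  by (simp add: mem_cone_append_zeros)

section \<open>Splitting nodes\<close>

definition splitting :: "(nat \<Rightarrow> bool) set \<Rightarrow> bool list \<Rightarrow> bool" where
  "splitting X l \<longleftrightarrow> infinite {k. length l \<le> k \<and> bad X (extend_one l k)}"

lemma splitting_imp_cone_nonempty:
  assumes "splitting X l"
  shows "cone X l \<noteq> {}"
proof -
  obtain k where "bad X (extend_one l k)"
    using assms not_finite_existsD unfolding splitting_def by blast
  then show ?thesis
    using bad_imp_cone_nonempty cone_antimono[OF prefix_extend_one] by blast
qed

lemma cone_append_zeros_eq_UN:
  assumes "X \<subseteq> inf_subsets" and "length l \<le> K"
  shows "cone X (l @ replicate (K - length l) False) = (\<Union>k\<in>{K..}. cone X (extend_one l k))"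
proof (intro equalityI subsetI)
  fix y assume y: "y \<in> cone X (l @ replicate (K - length l) False)"
  then have "infinite {n. y n}"
    using assms(1) by (auto simp: cone_def inf_subsets_def)
  then obtain k0 where "K \<le> k0" "y k0"
    unfolding infinite_nat_iff_unbounded_le by blast
  then obtain k where k: "K \<le> k" "y k" and least: "\<forall>j<k. \<not> (K \<le> j \<and> y j)"
    using exists_least_iff[of "\<lambda>k. K \<le> k \<and> y k"] by blast
  have "y \<in> cone X (extend_one l k)"
    using y k least assms(2) by (force simp: mem_cone_append_zeros mem_cone_extend_one)
  with k show "y \<in> (\<Union>k\<in>{K..}. cone X (extend_one l k))" by blast
next
  fix y assume "y \<in> (\<Union>k\<in>{K..}. cone X (extend_one l k))"
  then obtain k where "K \<le> k" "y \<in> cone X (extend_one l k)" by blast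
  then show "y \<in> cone X (l @ replicate (K - length l) False)"
    using assms(2) by (auto simp: mem_cone_append_zeros mem_cone_extend_one)
qed

lemma not_splitting_imp_good_zero_extension:
  assumes "X \<subseteq> inf_subsets" and "\<not> splitting X g"
  obtains K where "length g \<le> K" and "\<not> bad X (g @ replicate (K - length g) False)"
proof -
  obtain B where B: "\<And>k. length g \<le> k \<Longrightarrow> bad X (extend_one g k) \<Longrightarrow> k \<le> B"
    using assms(2) unfolding splitting_def finite_nat_set_iff_bounded_le by blast
  define K where "K = max (length g) (Suc B)"
  have K: "length g \<le> K" by (simp add: K_def)
  have "sigma_compact_in inf_subsets_space (\<Union>k\<in>{K..}. cone X (extend_one g k))"
  proof (rule sigma_compact_in_UN)
    fix k assume "k \<in> {K..}"
    then have "\<not> bad X (extend_one g k)" using B[of k] by (auto simp: K_def)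
    then show "sigma_compact_in inf_subsets_space (cone X (extend_one g k))" by (simp add: bad_def)
  qed simp
  then have "\<not> bad X (g @ replicate (K - length g) False)"
    by (simp add: bad_def cone_append_zeros_eq_UN[OF assms(1) K])
  with K show ?thesis by (rule that)
qed

(* A branch with finitely many ones eventually runs along zeros from a non-splitting node,
   and the long zero extensions of such a node are good. *)
lemma bad_branch_infinite:
  assumes X: "X \<subseteq> inf_subsets"
    and no_splitting: "\<forall>t. \<not> splitting X (l @ t)"
    and z_l: "init_seg z (length l) = l"
    and bad: "\<forall>m\<ge>length l. bad X (init_seg z m)"
  shows "infinite {n. z n}"
proof
  assume "finite {n. z n}"
  then obtain M where M: "\<And>n. z n \<Longrightarrow> n < M"
    unfolding finite_nat_set_iff_bounded by blast
  define g where "g = init_seg z (max M (length l))"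
  have "prefix l g"
    using prefix_init_seg[of "length l" "max M (length l)" z] z_l by (simp add: g_def)
  then have "\<not> splitting X g"
    using no_splitting by (auto simp: prefix_def)
  then obtain K where K: "length g \<le> K" "\<not> bad X (g @ replicate (K - length g) False)"
    using not_splitting_imp_good_zero_extension[OF X] by blast
  have "init_seg z K = g @ replicate (K - length g) False"
    using K(1) M unfolding g_def length_init_seg by (intro init_seg_eq_append_zeros) fastforce+
  with K bad show False
    by (metis g_def length_init_seg max.bounded_iff)
qed

lemma closedin_bad_branches:
  assumes X: "closedin inf_subsets_space X" and no_splitting: "\<forall>t. \<not> splitting X (l @ t)"
  shows "closedin cantor_space {y \<in> cone X l. \<forall>m\<ge>length l. bad X (init_seg y m)}"
    (is "closedin _ ?S")
  unfolding closedin_cantor_space_iff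
proof (intro allI impI)
  fix z assume approx: "\<forall>m. \<exists>y\<in>?S. init_seg y m = init_seg z m"
  have z_l: "init_seg z (length l) = l"
    using approx[rule_format, of "length l"] by (auto simp: cone_def)
  have bad: "\<forall>m\<ge>length l. bad X (init_seg z m)"
  proof (intro allI impI)
    fix m assume "length l \<le> m"
    obtain y where y: "y \<in> ?S" "init_seg y m = init_seg z m"
      using approx by blast
    have "bad X (init_seg y m)"
      using y(1) \<open>length l \<le> m\<close> by simp
    with y(2) show "bad X (init_seg z m)" by simp
  qed
  have approx_X: "\<forall>m. \<exists>y\<in>X. init_seg y m = init_seg z m"
  proof
    fix m
    obtain y where "y \<in> ?S" "init_seg y m = init_seg z m"
      using approx by blast
    then show "\<exists>y\<in>X. init_seg y m = init_seg z m" by (auto simp: cone_def)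
  qed
  have "X \<subseteq> inf_subsets"
    using closedin_subset[OF X] by simp
  then have "infinite {n. z n}"
    using no_splitting z_l bad by (rule bad_branch_infinite)
  then have "z \<in> X"
    using mem_closedin_inf_subsets_space[OF X _ approx_X] by blast
  with z_l bad show "z \<in> ?S"
    by (simp add: cone_def)
qed

lemma cone_eq_bad_branches_Un_good_cones:
  "cone X l = {y \<in> cone X l. \<forall>m\<ge>length l. bad X (init_seg y m)} \<union>
      (\<Union>g\<in>{g. prefix l g \<and> \<not> bad X g}. cone X g)"
proof (intro equalityI subsetI)
  fix y assume y: "y \<in> cone X l"
  show "y \<in> {y \<in> cone X l. \<forall>m\<ge>length l. bad X (init_seg y m)} \<union>
      (\<Union>g\<in>{g. prefix l g \<and> \<not> bad X g}. cone X g)"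
  proof (cases "\<forall>m\<ge>length l. bad X (init_seg y m)")
    case False
    then obtain m where m: "length l \<le> m" "\<not> bad X (init_seg y m)" by blast
    have "prefix l (init_seg y m)"
      using y prefix_init_seg[OF m(1), of y] by (simp add: cone_def)
    moreover have "y \<in> cone X (init_seg y m)"
      using y by (simp add: cone_def)
    ultimately show ?thesis using m(2) by blast
  qed (use y in simp)
qed (use cone_antimono in blast)+

lemma bad_imp_splitting_extension:
  assumes X: "closedin inf_subsets_space X" and "bad X l"
  shows "\<exists>t. splitting X (l @ t)"
proof (rule ccontr)
  assume "\<nexists>t. splitting X (l @ t)"
  then have no_splitting: "\<forall>t. \<not> splitting X (l @ t)" by blast
  define S where "S = {y \<in> cone X l. \<forall>m\<ge>length l. bad X (init_seg y m)}"
  have "S \<subseteq> inf_subsets"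
    using closedin_subset[OF X] by (auto simp: S_def cone_def)
  then have "sigma_compact_in inf_subsets_space S"
    using closedin_bad_branches[OF X no_splitting]
    by (simp add: S_def compactin_imp_sigma_compact_in compactin_inf_subsets_space)
  moreover have "sigma_compact_in inf_subsets_space (\<Union>g\<in>{g. prefix l g \<and> \<not> bad X g}. cone X g)"
    by (rule sigma_compact_in_UN) (auto simp: bad_def intro: countableI_type)
  ultimately show False
    using \<open>bad X l\<close> cone_eq_bad_branches_Un_good_cones[of X l, folded S_def] sigma_compact_in_Un
    unfolding bad_def by metis
qed

lemma splitting_extension:
  assumes X: "closedin inf_subsets_space X" and "splitting X a"
  shows "\<exists>a'. splitting X a' \<and> prefix a a' \<and> L < length a' \<and>
    ones a' \<subseteq> ones a \<union> {L..} \<and> ones a' \<inter> {L..} \<noteq> {}"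
proof -
  obtain k where k: "max L (length a) \<le> k" "bad X (extend_one a k)"
    using \<open>splitting X a\<close> unfolding splitting_def infinite_nat_iff_unbounded_le by force
  then obtain t where t: "splitting X (extend_one a k @ t)"
    using bad_imp_splitting_extension[OF X] by blast
  have ones: "ones (extend_one a k @ t) = insert k (ones a) \<union> (+) (Suc k) ` ones t"
    using k(1) by (simp add: ones_append ones_extend_one)
  show ?thesis
  proof (intro exI conjI)
    show "prefix a (extend_one a k @ t)"
      by (simp add: extend_one_def)
    show "L < length (extend_one a k @ t)"
      using k(1) by simp
    show "ones (extend_one a k @ t) \<subseteq> ones a \<union> {L..}"
      using k(1) ones by auto
    show "ones (extend_one a k @ t) \<inter> {L..} \<noteq> {}"
      using k(1) ones by auto
  qed (rule t)
qed

section \<open>Two almost disjoint branches\<close>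

definition chain_lim :: "(nat \<Rightarrow> bool list) \<Rightarrow> nat \<Rightarrow> bool" where
  "chain_lim A i \<longleftrightarrow> (\<exists>n. i \<in> ones (A n))"

lemma init_seg_chain_lim:
  assumes chain: "\<And>n. prefix (A n) (A (Suc n))"
  shows "init_seg (chain_lim A) (length (A n)) = A n"
  unfolding init_seg_eq_list_iff
proof (intro allI impI)
  fix i assume i: "i < length (A n)"
  have "A n ! i" if "i \<in> ones (A m)" for m
  proof (cases "m \<le> n")
    case True
    then have "ones (A m) \<subseteq> ones (A n)"
      using prefix_order.lift_Suc_mono_le[of A, OF chain] ones_mono by blast
    with that show ?thesis by (auto simp: ones_def)
  next
    case False
    then obtain t where "A m = A n @ t"
      using prefix_order.lift_Suc_mono_le[of A, OF chain, of n m] by (auto simp: prefix_def)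
    with that i show ?thesis by (simp add: ones_def nth_append)
  qed
  with i show "chain_lim A i = A n ! i"
    by (auto simp: chain_lim_def ones_def)
qed

lemma infinite_chain_lim:
  assumes "\<And>n. ones (A (Suc n)) \<inter> {n..} \<noteq> {}"
  shows "infinite {i. chain_lim A i}"
  unfolding infinite_nat_iff_unbounded_le
proof
  fix n
  from assms obtain i where "i \<in> ones (A (Suc n))" "n \<le> i" by blast
  then show "\<exists>i\<ge>n. i \<in> {i. chain_lim A i}" by (auto simp: chain_lim_def)
qed

lemma chain_lim_inter_subset:
  assumes "\<And>n. prefix (A n) (A (Suc n))" and "\<And>n. prefix (B n) (B (Suc n))"
  shows "{i. chain_lim A i \<and> chain_lim B i} \<subseteq> (\<Union>n. ones (A n) \<inter> ones (B n))"
proof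
  fix i assume "i \<in> {i. chain_lim A i \<and> chain_lim B i}"
  then obtain m n where "i \<in> ones (A m)" "i \<in> ones (B n)"
    by (auto simp: chain_lim_def)
  moreover have "ones (A m) \<subseteq> ones (A (max m n))" "ones (B n) \<subseteq> ones (B (max m n))"
    using prefix_order.lift_Suc_mono_le assms ones_mono by (metis max.cobounded1 max.cobounded2)+
  ultimately show "i \<in> (\<Union>n. ones (A n) \<inter> ones (B n))" by blast
qed

lemma ones_inter_alternating_step:
  assumes "ones a' \<subseteq> ones a \<union> {length b..}" and "ones b' \<subseteq> ones b \<union> {length a'..}"
  shows "ones a' \<inter> ones b' \<subseteq> ones a \<inter> ones b"
  using assms ones_less_length[of _ a'] ones_less_length[of _ b] by fastforce

(* The A-step places its new ones beyond length (B n) and the B-step beyond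
   length (A (Suc n)), so outside a0 the two chains never share a one. *)
lemma alternating_chains:
  fixes Q :: "bool list \<Rightarrow> bool"
  assumes step: "\<And>a L. Q a \<Longrightarrow> \<exists>a'. Q a' \<and> prefix a a' \<and> L < length a' \<and>
      ones a' \<subseteq> ones a \<union> {L..} \<and> ones a' \<inter> {L..} \<noteq> {}"
    and "Q a0"
  obtains A B
  where "\<And>n. Q (A n)" "\<And>n. prefix (A n) (A (Suc n))"
    "\<And>n. n \<le> length (A n)" "\<And>n. ones (A (Suc n)) \<inter> {n..} \<noteq> {}"
    and "\<And>n. Q (B n)" "\<And>n. prefix (B n) (B (Suc n))"
    "\<And>n. n \<le> length (B n)" "\<And>n. ones (B (Suc n)) \<inter> {n..} \<noteq> {}"
    and "\<And>n. ones (A n) \<inter> ones (B n) \<subseteq> ones a0"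
proof -
  obtain ext where ext: "\<And>a L. Q a \<Longrightarrow> Q (ext a L) \<and> prefix a (ext a L) \<and> L < length (ext a L) \<and>
      ones (ext a L) \<subseteq> ones a \<union> {L..} \<and> ones (ext a L) \<inter> {L..} \<noteq> {}"
    using step by metis
  define AB where "AB = rec_nat (a0, a0)
    (\<lambda>_ p. let a' = ext (fst p) (length (snd p)) in (a', ext (snd p) (length a')))"
  define A where "A n = fst (AB n)" for n
  define B where "B n = snd (AB n)" for n
  have A_Suc: "A (Suc n) = ext (A n) (length (B n))"
    and B_Suc: "B (Suc n) = ext (B n) (length (A (Suc n)))" for n
    by (simp_all add: A_def B_def AB_def Let_def)
  have inv: "Q (A n) \<and> Q (B n) \<and> n \<le> length (A n) \<and> length (A n) \<le> length (B n) \<and>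
      ones (A n) \<inter> ones (B n) \<subseteq> ones a0" for n
  proof (induction n)
    case 0
    show ?case using \<open>Q a0\<close> by (simp add: A_def B_def AB_def)
  next
    case (Suc n)
    then have "Q (A n)" "Q (B n)" by simp_all
    note A' = ext[OF \<open>Q (A n)\<close>, of "length (B n)", folded A_Suc]
    note B' = ext[OF \<open>Q (B n)\<close>, of "length (A (Suc n))", folded B_Suc]
    have "ones (A (Suc n)) \<inter> ones (B (Suc n)) \<subseteq> ones (A n) \<inter> ones (B n)"
      using A' B' by (intro ones_inter_alternating_step) simp_all
    with Suc A' B' show ?case by auto
  qed
  have A_step: "prefix (A n) (A (Suc n)) \<and> ones (A (Suc n)) \<inter> {length (B n)..} \<noteq> {}" for n
    using ext[of "A n" "length (B n)"] inv[of n] by (simp add: A_Suc)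
  have B_step: "prefix (B n) (B (Suc n)) \<and> ones (B (Suc n)) \<inter> {length (A (Suc n))..} \<noteq> {}" for n
    using ext[of "B n" "length (A (Suc n))"] inv[of n] by (simp add: B_Suc)
  show ?thesis
  proof (rule that)
    fix n
    show "Q (A n)" "Q (B n)" "n \<le> length (A n)" "n \<le> length (B n)"
      "ones (A n) \<inter> ones (B n) \<subseteq> ones a0"
      using inv[of n] by auto
    show "prefix (A n) (A (Suc n))" "prefix (B n) (B (Suc n))"
      using A_step B_step by simp_all
    show "ones (A (Suc n)) \<inter> {n..} \<noteq> {}"
      using A_step[of n] inv[of n] by auto
    show "ones (B (Suc n)) \<inter> {n..} \<noteq> {}"
      using B_step[of n] inv[of "Suc n"] by auto
  qed
qed

lemma chain_lim_mem_of_splitting: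
  assumes X: "closedin inf_subsets_space X"
    and chain: "\<And>n. prefix (C n) (C (Suc n))" and splitting: "\<And>n. splitting X (C n)"
    and long: "\<And>n. n \<le> length (C n)" and new_ones: "\<And>n. ones (C (Suc n)) \<inter> {n..} \<noteq> {}"
  shows "chain_lim C \<in> X"
proof (rule mem_closedin_inf_subsets_space[OF X])
  show "infinite {i. chain_lim C i}"
    using new_ones by (rule infinite_chain_lim)
  show "\<forall>m. \<exists>y\<in>X. init_seg y m = init_seg (chain_lim C) m"
  proof
    fix m
    obtain w where w: "w \<in> cone X (C m)"
      using splitting_imp_cone_nonempty splitting by blast
    then have "init_seg w (length (C m)) = init_seg (chain_lim C) (length (C m))"
      using init_seg_chain_lim[of C, OF chain] by (simp add: cone_def)
    then have "init_seg w m = init_seg (chain_lim C) m"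
      using take_init_seg[OF long] by metis
    with w show "\<exists>y\<in>X. init_seg y m = init_seg (chain_lim C) m"
      by (auto simp: cone_def)
  qed
qed

lemma splitting_imp_almost_disjoint_pair:
  assumes X: "closedin inf_subsets_space X" and "splitting X a0"
  obtains y z where "y \<in> X" "z \<in> X" "finite {n. y n \<and> z n}"
proof -
  show ?thesis
  proof (rule alternating_chains[of "splitting X", OF splitting_extension[OF X] \<open>splitting X a0\<close>])
    fix A B
    assume A: "\<And>n. splitting X (A n)" "\<And>n. prefix (A n) (A (Suc n))"
        "\<And>n. n \<le> length (A n)" "\<And>n. ones (A (Suc n)) \<inter> {n..} \<noteq> {}"
      and B: "\<And>n. splitting X (B n)" "\<And>n. prefix (B n) (B (Suc n))"
        "\<And>n. n \<le> length (B n)" "\<And>n. ones (B (Suc n)) \<inter> {n..} \<noteq> {}"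
      and disjoint: "\<And>n. ones (A n) \<inter> ones (B n) \<subseteq> ones a0"
    have "{n. chain_lim A n \<and> chain_lim B n} \<subseteq> ones a0"
      using chain_lim_inter_subset[of A B] A(2) B(2) disjoint by blast
    then have "finite {n. chain_lim A n \<and> chain_lim B n}"
      by (rule finite_subset) simp
    moreover have "chain_lim A \<in> X" by (rule chain_lim_mem_of_splitting[OF X]) (rule A)+
    moreover have "chain_lim B \<in> X" by (rule chain_lim_mem_of_splitting[OF X]) (rule B)+
    ultimately show thesis by (intro that)
  qed
qed

theorem lemma5p4:
  fixes X :: "(nat \<Rightarrow> bool) set"
  assumes "closedin inf_subsets_space X"
    and "\<forall>x\<in>X. \<forall>y\<in>X. infinite {n. x n \<and> y n}"
  shows "sigma_compact_in inf_subsets_space X"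
proof (rule ccontr)
  assume "\<not> sigma_compact_in inf_subsets_space X"
  then have "bad X []"
    by (simp add: bad_def)
  then obtain a0 where "splitting X a0"
    using bad_imp_splitting_extension[OF assms(1)] by auto
  then obtain y z where "y \<in> X" "z \<in> X" "finite {n. y n \<and> z n}"
    using splitting_imp_almost_disjoint_pair[OF assms(1)] by blast
  with assms(2) show False by blast
qed

end
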